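(* Let $n\ge 4$. Consider the two-graph Moran process on $n$ vertices in which the resident graph $G_R$ is the undirected star $K_{1,n-1}$ and the mutant graph $G_M$ is the clique $K_n$. If $r>\big((n-4)!\big)^{-1/(n-2)}$, then the fixation probability satisfies $$f_{G_R,G_M}(r)\ \ge\ \frac{1-\frac1n}{1+\frac{1}{r(n-2)}+\frac{1}{r^2(n-3)}}\ >\ 1-\frac1n-\frac{1}{r(n-2)}-\frac{1}{r^2(n-3)}.$$
   Context: Two-graph Moran process: vertex set $V=\{1,\dots,n\}$; resident graph $G_R=(V,E_R)$ and mutant graph $G_M=(V,E_M)$, strongly connected, with row-stochastic weight matrices $W_R=[w^R_{ij}]$, $W_M=[w^M_{ij}]$ ($w^R_{ij}>0$ iff $(i,j)\in E_R$, similarly for $M$). The state is the mutant set $S$; residents have fitness $1$, mutants fitness $r>0$. Each step a vertex $i$ is chosen with probability proportional to fitness; if $i$ is a mutant, it picks $j$ with probability $w^M_{ij}$ and $j$ becomes a mutant; if a resident, it picks $j$ with probability $w^R_{ij}$ and $j$ becomes a resident. Absorption at $S=\emptyset$ or $S=V$ (fixation). The fixation probability $f_{G_R,G_M}(r)$ is the probability of fixation when starting with one mutant at a uniformly random vertex. Undirected graphs are unweighted: $w_{ij}=1/\deg(i)$ for each neighbour $j$ of $i$ (edges in both directions). Thus for the clique $K_n$, $w_{ij}=1/(n-1)$ for all $j\ne i$. *)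

theory Defs
  imports Complex_Main
begin

text \<open>Vertex set V = {1..n}. A state is the set S of mutant vertices.\<close>

definition undirected_weights :: "nat \<Rightarrow> (nat \<Rightarrow> nat \<Rightarrow> bool) \<Rightarrow> nat \<Rightarrow> nat \<Rightarrow> real" where
  "undirected_weights n E i j =
     (if i \<in> {1..n} \<and> j \<in> {1..n} \<and> E i j
      then 1 / real (card {k \<in> {1..n}. E i k}) else 0)"

definition star_edge :: "nat \<Rightarrow> nat \<Rightarrow> bool" where
  "star_edge i j \<longleftrightarrow> (i = 1 \<and> j \<noteq> 1) \<or> (j = 1 \<and> i \<noteq> 1)"

definition clique_edge :: "nat \<Rightarrow> nat \<Rightarrow> bool" where
  "clique_edge i j \<longleftrightarrow> i \<noteq> j"

definition moran_trans ::
  "nat \<Rightarrow> real \<Rightarrow> (nat \<Rightarrow> nat \<Rightarrow> real) \<Rightarrow> (nat \<Rightarrow> nat \<Rightarrow> real) \<Rightarrow> nat set \<Rightarrow> nat set \<Rightarrow> real" where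
  "moran_trans n r WR WM S T =
     (if S = {} \<or> S = {1..n} then (if T = S then 1 else 0)
      else (\<Sum>i\<in>{1..n}. \<Sum>j\<in>{1..n}.
              ((if i \<in> S then r else 1) / (r * real (card S) + real (n - card S)))
              * (if i \<in> S then WM i j else WR i j)
              * (if (if i \<in> S then insert j S else S - {j}) = T then 1 else 0)))"

fun moran_dist ::
  "nat \<Rightarrow> real \<Rightarrow> (nat \<Rightarrow> nat \<Rightarrow> real) \<Rightarrow> (nat \<Rightarrow> nat \<Rightarrow> real) \<Rightarrow> nat set \<Rightarrow> nat \<Rightarrow> nat set \<Rightarrow> real" where
  "moran_dist n r WR WM S0 0 T = (if T = S0 then 1 else 0)"
| "moran_dist n r WR WM S0 (Suc t) T =
     (\<Sum>S\<in>Pow {1..n}. moran_dist n r WR WM S0 t S * moran_trans n r WR WM S T)"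

definition fixation_prob ::
  "nat \<Rightarrow> real \<Rightarrow> (nat \<Rightarrow> nat \<Rightarrow> real) \<Rightarrow> (nat \<Rightarrow> nat \<Rightarrow> real) \<Rightarrow> real" where
  "fixation_prob n r WR WM =
     lim (\<lambda>t. (\<Sum>i\<in>{1..n}. moran_dist n r WR WM {i} t {1..n}) / real n)"

end

theory Submission
  imports Defs
begin

text \<open>The fixation probability, as a function of the initial state, is harmonic for the chain with
  boundary values 0 on the empty state and 1 on the full one, and the chain is absorbed almost
  surely (\<open>M\<^bsup>|S|\<^esup>\<close> strictly increases in expectation for large \<open>M\<close>). Hence every bounded
  subharmonic function with these boundary values is a lower bound. For the star/clique pair,
  functions of the centre's type and the number \<open>k\<close> of mutant leaves have an explicit drift. We
  take \<open>h(k)\<close> whose increments make the drift vanish on states with a resident centre; then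
  \<open>h(1) = 1/D\<close> where \<open>D\<close> is the denominator of the bound, and the threshold on \<open>r\<close> is what
  makes \<open>h\<close> stay below 1 and keeps the drift nonnegative when the centre is a mutant.\<close>

locale moran_process =
  fixes n :: nat and r :: real and WR WM :: "nat \<Rightarrow> nat \<Rightarrow> real"
  assumes fitness_pos: "r > 0"
    and WR_nonneg: "\<And>i j. WR i j \<ge> 0" and WM_nonneg: "\<And>i j. WM i j \<ge> 0"
    and WR_row_sum: "\<And>i. i \<in> {1..n} \<Longrightarrow> (\<Sum>j\<in>{1..n}. WR i j) = 1"
    and WM_row_sum: "\<And>i. i \<in> {1..n} \<Longrightarrow> (\<Sum>j\<in>{1..n}. WM i j) = 1"
begin

abbreviation transient :: "nat set \<Rightarrow> bool" where
  "transient S \<equiv> S \<noteq> {} \<and> S \<noteq> {1..n}"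

abbreviation total_fitness :: "nat set \<Rightarrow> real" where
  "total_fitness S \<equiv> r * real (card S) + real (n - card S)"

abbreviation state_prob :: "nat set \<Rightarrow> nat \<Rightarrow> nat set \<Rightarrow> real" where
  "state_prob S0 t T \<equiv> moran_dist n r WR WM S0 t T"

definition expect :: "nat set \<Rightarrow> (nat set \<Rightarrow> real) \<Rightarrow> real" where
  "expect S F = (\<Sum>T\<in>Pow {1..n}. moran_trans n r WR WM S T * F T)"

definition mean :: "nat set \<Rightarrow> nat \<Rightarrow> (nat set \<Rightarrow> real) \<Rightarrow> real" where
  "mean S0 t F = (\<Sum>T\<in>Pow {1..n}. state_prob S0 t T * F T)"

lemma total_fitness_pos:
  assumes "S \<subseteq> {1..n}" "S \<noteq> {}"
  shows "total_fitness S > 0"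
proof -
  have "card S > 0" using assms by (meson card_gt_0_iff finite_atLeastAtMost finite_subset)
  thus ?thesis using fitness_pos by (simp add: add_pos_nonneg)
qed

lemma moran_trans_nonneg:
  assumes "S \<subseteq> {1..n}"
  shows "moran_trans n r WR WM S T \<ge> 0"
proof (cases "transient S")
  case True
  have W: "total_fitness S > 0" using total_fitness_pos assms True by blast
  show ?thesis using True unfolding moran_trans_def
    by (simp only: if_False simp_thms)
      (intro sum_nonneg mult_nonneg_nonneg divide_nonneg_pos[OF _ W],
       simp_all add: WR_nonneg WM_nonneg less_imp_le[OF fitness_pos])
qed (auto simp: moran_trans_def)

lemma state_prob_nonneg: "state_prob S0 t T \<ge> 0"
  by (induction t arbitrary: T) (auto intro!: sum_nonneg mult_nonneg_nonneg moran_trans_nonneg)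

lemma expect_absorbing:
  assumes "S \<subseteq> {1..n}" "\<not> transient S"
  shows "expect S F = F S"
proof -
  have "expect S F = (\<Sum>T\<in>Pow {1..n}. if S = T then F T else 0)"
    unfolding expect_def using assms(2) by (intro sum.cong refl) (auto simp: moran_trans_def)
  thus ?thesis using assms(1) by (simp add: sum.delta)
qed

lemma expect_transient:
  assumes "S \<subseteq> {1..n}" "transient S"
  shows "expect S F =
    (\<Sum>i\<in>{1..n}. \<Sum>j\<in>{1..n}. (if i \<in> S then r else 1) / total_fitness S
       * (if i \<in> S then WM i j else WR i j) * F (if i \<in> S then insert j S else S - {j}))"
proof -
  define p where "p i j = (if i \<in> S then r else 1) / total_fitness S * (if i \<in> S then WM i j else WR i j)"
    for i j
  define succ where "succ i j = (if i \<in> S then insert j S else S - {j})" for i j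
  have "moran_trans n r WR WM S T * F T
      = (\<Sum>i\<in>{1..n}. \<Sum>j\<in>{1..n}. if succ i j = T then p i j * F T else 0)" for T
    unfolding moran_trans_def p_def succ_def using assms(2)
    by (simp add: sum_distrib_right) (intro sum.cong refl, simp)
  hence "expect S F = (\<Sum>T\<in>Pow {1..n}. \<Sum>i\<in>{1..n}. \<Sum>j\<in>{1..n}. if succ i j = T then p i j * F T else 0)"
    unfolding expect_def by simp
  also have "\<dots> = (\<Sum>i\<in>{1..n}. \<Sum>j\<in>{1..n}. \<Sum>T\<in>Pow {1..n}. if succ i j = T then p i j * F T else 0)"
    by (subst sum.swap, subst (2) sum.swap) (rule refl)
  also have "\<dots> = (\<Sum>i\<in>{1..n}. \<Sum>j\<in>{1..n}. p i j * F (succ i j))"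
    using assms(1) by (intro sum.cong refl) (auto simp: sum.delta succ_def)
  finally show ?thesis unfolding p_def succ_def .
qed

lemma expect_const:
  assumes "S \<subseteq> {1..n}"
  shows "expect S (\<lambda>_. c) = c"
proof (cases "transient S")
  case True
  have fin: "finite S" using assms finite_subset by blast
  have "expect S (\<lambda>_. c) = (\<Sum>i\<in>{1..n}. (if i \<in> S then r else 1) / total_fitness S
       * (\<Sum>j\<in>{1..n}. if i \<in> S then WM i j else WR i j) * c)"
    unfolding expect_transient[OF assms True] by (simp add: sum_distrib_left sum_distrib_right)
  also have "\<dots> = (\<Sum>i\<in>{1..n}. (if i \<in> S then r else 1) / total_fitness S * c)"
  proof (intro sum.cong refl)
    fix i assume "i \<in> {1..n}"
    thus "(if i \<in> S then r else 1) / total_fitness S * (\<Sum>j\<in>{1..n}. if i \<in> S then WM i j else WR i j) * c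
        = (if i \<in> S then r else 1) / total_fitness S * c"
      using WR_row_sum WM_row_sum by (cases "i \<in> S") auto
  qed
  also have "\<dots> = (\<Sum>i\<in>{1..n}. if i \<in> S then r else 1) / total_fitness S * c"
    by (simp add: sum_divide_distrib sum_distrib_right)
  also have "(\<Sum>i\<in>{1..n}. if i \<in> S then r else 1) = total_fitness S"
  proof -
    have "{1..n} \<inter> - S = {1..n} - S" by blast
    thus ?thesis using assms fin by (simp add: sum.If_cases Int_absorb1 card_Diff_subset)
  qed
  finally show ?thesis using total_fitness_pos[OF assms] True by simp
qed (use expect_absorbing[OF assms] in blast)

lemma expect_minus_self:
  assumes "S \<subseteq> {1..n}" "transient S"
  shows "expect S F - F S =
    (r * (\<Sum>i\<in>S. \<Sum>j\<in>{1..n}. WM i j * (F (insert j S) - F S))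
      + (\<Sum>i\<in>{1..n} - S. \<Sum>j\<in>{1..n}. WR i j * (F (S - {j}) - F S))) / total_fitness S"
proof -
  define G where "G T = F T - F S" for T
  have "expect S F - F S = expect S G"
    using expect_const[OF assms(1), of "F S"]
    unfolding expect_def G_def by (simp add: right_diff_distrib sum_subtractf)
  also have "\<dots> = (\<Sum>i\<in>{1..n} - S. \<Sum>j\<in>{1..n}. 1 / total_fitness S * WR i j * G (S - {j}))
      + (\<Sum>i\<in>S. \<Sum>j\<in>{1..n}. r / total_fitness S * WM i j * G (insert j S))"
    unfolding expect_transient[OF assms] sum.subset_diff[OF assms(1) finite_atLeastAtMost]
    by (intro arg_cong2[where f = "(+)"] sum.cong refl) auto
  also have "\<dots> = (r * (\<Sum>i\<in>S. \<Sum>j\<in>{1..n}. WM i j * G (insert j S))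
      + (\<Sum>i\<in>{1..n} - S. \<Sum>j\<in>{1..n}. WR i j * G (S - {j}))) / total_fitness S"
    by (simp add: sum_distrib_left sum_divide_distrib add_divide_distrib mult_ac)
  finally show ?thesis unfolding G_def .
qed

lemma mean_0:
  assumes "S0 \<subseteq> {1..n}"
  shows "mean S0 0 F = F S0"
proof -
  have "mean S0 0 F = (\<Sum>T\<in>Pow {1..n}. if T = S0 then F T else 0)"
    unfolding mean_def by (intro sum.cong) auto
  thus ?thesis using assms by (simp add: sum.delta)
qed

lemma mean_Suc: "mean S0 (Suc t) F = mean S0 t (\<lambda>S. expect S F)"
proof -
  have "mean S0 (Suc t) F =
      (\<Sum>T\<in>Pow {1..n}. \<Sum>S\<in>Pow {1..n}. state_prob S0 t S * (moran_trans n r WR WM S T * F T))"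
    unfolding mean_def by (simp add: sum_distrib_right mult.assoc)
  also have "\<dots> = (\<Sum>S\<in>Pow {1..n}. \<Sum>T\<in>Pow {1..n}. state_prob S0 t S * (moran_trans n r WR WM S T * F T))"
    by (rule sum.swap)
  finally show ?thesis unfolding mean_def expect_def by (simp add: sum_distrib_left)
qed

lemma mean_cong:
  assumes "\<And>S. S \<subseteq> {1..n} \<Longrightarrow> F S = G S"
  shows "mean S0 t F = mean S0 t G"
  unfolding mean_def using assms by (auto intro!: sum.cong)

lemma mean_mono:
  assumes "\<And>S. S \<subseteq> {1..n} \<Longrightarrow> F S \<le> G S"
  shows "mean S0 t F \<le> mean S0 t G"
  unfolding mean_def using assms by (auto intro!: sum_mono mult_left_mono state_prob_nonneg)

lemma mean_add: "mean S0 t (\<lambda>S. F S + G S) = mean S0 t F + mean S0 t G"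
  unfolding mean_def by (simp add: distrib_left sum.distrib)

lemma mean_cmult: "mean S0 t (\<lambda>S. c * F S) = c * mean S0 t F"
  unfolding mean_def by (simp add: sum_distrib_left mult_ac)

lemma mean_const:
  assumes "S0 \<subseteq> {1..n}"
  shows "mean S0 t (\<lambda>_. c) = c"
proof (induction t)
  case (Suc t)
  show ?case unfolding mean_Suc
    using mean_cong[of "\<lambda>S. expect S (\<lambda>_. c)" "\<lambda>_. c"] by (simp add: expect_const Suc.IH)
qed (simp add: mean_0[OF assms])

lemma mean_indicator:
  assumes "T \<subseteq> {1..n}"
  shows "mean S0 t (\<lambda>S. of_bool (S = T)) = state_prob S0 t T"
proof -
  have "mean S0 t (\<lambda>S. of_bool (S = T)) = (\<Sum>S\<in>Pow {1..n}. if S = T then state_prob S0 t S else 0)"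
    unfolding mean_def by (intro sum.cong) auto
  thus ?thesis using assms by (simp add: sum.delta')
qed

lemma mean_drift:
  assumes "S0 \<subseteq> {1..n}" and drift: "\<And>S. S \<subseteq> {1..n} \<Longrightarrow> F S + d S \<le> expect S F"
  shows "F S0 + (\<Sum>s<t. mean S0 s d) \<le> mean S0 t F"
proof (induction t)
  case (Suc t)
  have "mean S0 t F + mean S0 t d \<le> mean S0 (Suc t) F"
    unfolding mean_Suc mean_add[symmetric] by (rule mean_mono[OF drift])
  thus ?case using Suc.IH by simp
qed (simp add: mean_0[OF assms(1)])

lemma state_prob_le_1:
  assumes "S0 \<subseteq> {1..n}" "T \<subseteq> {1..n}"
  shows "state_prob S0 t T \<le> 1"
proof -
  have "mean S0 t (\<lambda>S. of_bool (S = T)) \<le> mean S0 t (\<lambda>_. 1)"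
    by (rule mean_mono) simp
  thus ?thesis using mean_indicator[OF assms(2)] mean_const[OF assms(1)] by simp
qed

lemma state_prob_full_mono: "state_prob S0 t {1..n} \<le> state_prob S0 (Suc t) {1..n}"
proof -
  have "state_prob S0 t {1..n} * moran_trans n r WR WM {1..n} {1..n}
      \<le> (\<Sum>S\<in>Pow {1..n}. state_prob S0 t S * moran_trans n r WR WM S {1..n})"
    by (rule member_le_sum[where f = "\<lambda>S. state_prob S0 t S * moran_trans n r WR WM S {1..n}"])
      (auto intro!: mult_nonneg_nonneg state_prob_nonneg moran_trans_nonneg)
  thus ?thesis by (simp add: moran_trans_def)
qed

lemma Lyapunov_uniform_drift:
  assumes Lyapunov: "\<And>S. S \<subseteq> {1..n} \<Longrightarrow> transient S \<Longrightarrow> \<Psi> S < expect S \<Psi>"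
  obtains \<epsilon> where "\<epsilon> > 0" "\<And>S. S \<subseteq> {1..n} \<Longrightarrow> \<Psi> S + \<epsilon> * of_bool (transient S) \<le> expect S \<Psi>"
proof
  define gain where "gain = (\<lambda>S. expect S \<Psi> - \<Psi> S) ` {S \<in> Pow {1..n}. transient S}"
  define \<epsilon> where "\<epsilon> = Min (insert 1 gain)"
  have "finite gain" unfolding gain_def by simp
  moreover have "\<forall>a\<in>gain. 0 < a"
  proof
    fix a assume "a \<in> gain"
    then obtain S where S: "S \<subseteq> {1..n}" "transient S" and a: "a = expect S \<Psi> - \<Psi> S"
      unfolding gain_def by blast
    show "0 < a" using Lyapunov[OF S] a by simp
  qed
  ultimately show "\<epsilon> > 0" unfolding \<epsilon>_def by (subst Min_gr_iff) auto
  show "\<Psi> S + \<epsilon> * of_bool (transient S) \<le> expect S \<Psi>" if S: "S \<subseteq> {1..n}" for S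
  proof (cases "transient S")
    case True
    have "expect S \<Psi> - \<Psi> S \<in> gain" unfolding gain_def using S True by blast
    hence "\<epsilon> \<le> expect S \<Psi> - \<Psi> S" unfolding \<epsilon>_def by (intro Min_le) (auto simp: gain_def)
    thus ?thesis using True by simp
  next
    case False
    hence no_gain: "of_bool (transient S) = (0::real)" by (subst of_bool_eq_0_iff)
    show ?thesis unfolding no_gain expect_absorbing[OF S False] by simp
  qed
qed

text \<open>A uniform drift of a bounded function makes the expected time spent in transient states
  finite.\<close>
lemma transient_mass_tendsto_0:
  assumes S0: "S0 \<subseteq> {1..n}"
    and Lyapunov: "\<And>S. S \<subseteq> {1..n} \<Longrightarrow> transient S \<Longrightarrow> \<Psi> S < expect S \<Psi>"
  shows "(\<lambda>t. mean S0 t (\<lambda>S. of_bool (transient S))) \<longlonglongrightarrow> 0"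
proof -
  obtain \<epsilon> where \<epsilon>_pos: "\<epsilon> > 0"
    and drift: "\<And>S. S \<subseteq> {1..n} \<Longrightarrow> \<Psi> S + \<epsilon> * of_bool (transient S) \<le> expect S \<Psi>"
    using Lyapunov_uniform_drift[OF Lyapunov] by blast
  define m where "m t = mean S0 t (\<lambda>S. of_bool (transient S))" for t
  define B where "B = Max ((\<lambda>S. \<bar>\<Psi> S\<bar>) ` Pow {1..n})"
  have B: "\<bar>\<Psi> S\<bar> \<le> B" if "S \<subseteq> {1..n}" for S
    unfolding B_def using that by (intro Max_ge) auto
  have m_nonneg: "m t \<ge> 0" for t
    using mean_mono[of "\<lambda>_. 0" "\<lambda>S. of_bool (transient S)" S0 t] mean_const[OF S0] by (simp add: m_def)
  have "\<epsilon> * (\<Sum>s<t. m s) \<le> 2 * B" for t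
  proof -
    have "\<Psi> S0 + (\<Sum>s<t. mean S0 s (\<lambda>S. \<epsilon> * of_bool (transient S))) \<le> mean S0 t \<Psi>"
      by (rule mean_drift[OF S0 drift])
    also have "\<dots> \<le> mean S0 t (\<lambda>_. B)" by (rule mean_mono) (rule abs_le_D1[OF B])
    also have "\<dots> = B" by (rule mean_const[OF S0])
    finally have "\<Psi> S0 + \<epsilon> * (\<Sum>s<t. m s) \<le> B"
      unfolding mean_cmult m_def sum_distrib_left .
    thus ?thesis using B[OF S0] by linarith
  qed
  hence "(\<Sum>s<t. m s) \<le> 2 * B / \<epsilon>" for t
    using \<epsilon>_pos by (simp add: field_simps)
  hence "summable m" by (rule summableI_nonneg_bounded[OF m_nonneg])
  thus ?thesis unfolding m_def[symmetric] by (rule summable_LIMSEQ_zero)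
qed

lemma fixation_prob_limit:
  "(\<lambda>t. (\<Sum>i\<in>{1..n}. state_prob {i} t {1..n}) / real n) \<longlonglongrightarrow> fixation_prob n r WR WM"
proof -
  define P where "P t = (\<Sum>i\<in>{1..n}. state_prob {i} t {1..n}) / real n" for t
  have "incseq P" unfolding P_def
    by (intro incseq_SucI divide_right_mono sum_mono state_prob_full_mono) auto
  moreover have "P t \<le> 1" for t
  proof -
    have "(\<Sum>i\<in>{1..n}. state_prob {i} t {1..n}) \<le> (\<Sum>i\<in>{1..n}. 1)"
      by (intro sum_mono state_prob_le_1) auto
    thus ?thesis unfolding P_def by (simp add: divide_le_eq)
  qed
  ultimately have "P \<longlonglongrightarrow> (SUP t. P t)" by (intro LIMSEQ_incseq_SUP bdd_aboveI2[where M = 1])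
  moreover from this have "fixation_prob n r WR WM = (SUP t. P t)"
    unfolding fixation_prob_def P_def[symmetric] by (rule limI)
  ultimately show ?thesis unfolding P_def by simp
qed

text \<open>For the submartingale \<open>g\<close>: \<open>g {i} \<le> E g(S\<^sub>t) \<le> P(S\<^sub>t = V) + P(S\<^sub>t transient)\<close>, and the
  last term vanishes as \<open>t \<rightarrow> \<infinity>\<close>.\<close>
lemma fixation_prob_ge:
  assumes Lyapunov: "\<And>S. S \<subseteq> {1..n} \<Longrightarrow> transient S \<Longrightarrow> \<Psi> S < expect S \<Psi>"
    and subharmonic: "\<And>S. S \<subseteq> {1..n} \<Longrightarrow> g S \<le> expect S g"
    and le_1: "\<And>S. S \<subseteq> {1..n} \<Longrightarrow> g S \<le> 1" and empty: "g {} \<le> 0"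
  shows "(\<Sum>i\<in>{1..n}. g {i}) / real n \<le> fixation_prob n r WR WM"
proof -
  define m where "m i t = mean {i} t (\<lambda>S. of_bool (transient S))" for i t
  have low: "g {i} - m i t \<le> state_prob {i} t {1..n}" if i: "i \<in> {1..n}" for i t
  proof -
    have S0: "{i} \<subseteq> {1..n}" using i by simp
    have "g {i} \<le> mean {i} t g"
      using mean_drift[OF S0, of g "\<lambda>_. 0" t] subharmonic mean_const[OF S0, of _ 0] by simp
    also have "\<dots> \<le> mean {i} t (\<lambda>S. of_bool (S = {1..n}) + of_bool (transient S))"
      by (rule mean_mono) (use le_1 empty in auto)
    finally show ?thesis unfolding mean_add mean_indicator[OF order_refl] m_def by simp
  qed
  have "(\<Sum>i\<in>{1..n}. g {i}) - (\<Sum>i\<in>{1..n}. m i t) \<le> (\<Sum>i\<in>{1..n}. state_prob {i} t {1..n})" for t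
    unfolding sum_subtractf[symmetric] by (rule sum_mono) (rule low)
  hence ev: "eventually (\<lambda>t. ((\<Sum>i\<in>{1..n}. g {i}) - (\<Sum>i\<in>{1..n}. m i t)) / real n
      \<le> (\<Sum>i\<in>{1..n}. state_prob {i} t {1..n}) / real n) sequentially"
    by (intro always_eventually allI divide_right_mono) auto
  have lim: "(\<lambda>t. ((\<Sum>i\<in>{1..n}. g {i}) - (\<Sum>i\<in>{1..n}. m i t)) / real n)
      \<longlonglongrightarrow> ((\<Sum>i\<in>{1..n}. g {i}) - (\<Sum>i\<in>{1..n}. 0)) / real n"
  proof -
    have "(\<lambda>t. \<Sum>i\<in>{1..n}. m i t) \<longlonglongrightarrow> (\<Sum>i\<in>{1..n}. 0)"
      unfolding m_def by (intro tendsto_sum transient_mass_tendsto_0[OF _ Lyapunov]) simp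
    thus ?thesis unfolding divide_inverse by (intro tendsto_mult_right tendsto_diff tendsto_const)
  qed
  show ?thesis using tendsto_le[OF trivial_limit_sequentially fixation_prob_limit lim ev] by simp
qed

end

lemma undirected_weights_nonneg: "undirected_weights n E i j \<ge> 0"
  by (simp add: undirected_weights_def)

lemma undirected_weights_row_sum:
  assumes "i \<in> {1..n}" "\<exists>k\<in>{1..n}. E i k"
  shows "(\<Sum>j\<in>{1..n}. undirected_weights n E i j) = 1"
proof -
  have "(\<Sum>j\<in>{1..n}. undirected_weights n E i j)
      = (\<Sum>j\<in>{k \<in> {1..n}. E i k}. 1 / real (card {k \<in> {1..n}. E i k}))"
    unfolding undirected_weights_def using assms(1) by (simp add: sum.inter_filter[symmetric])
  also have "\<dots> = 1"
  proof -
    have "{k \<in> {1..n}. E i k} \<noteq> {}" using assms(2) by blast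
    thus ?thesis by (simp add: card_gt_0_iff)
  qed
  finally show ?thesis .
qed

lemma clique_weights:
  assumes "i \<in> {1..n}" "j \<in> {1..n}"
  shows "undirected_weights n clique_edge i j = (if i = j then 0 else 1 / (real n - 1))"
proof -
  have "{k \<in> {1..n}. clique_edge i k} = {1..n} - {i}" by (auto simp: clique_edge_def)
  hence "card {k \<in> {1..n}. clique_edge i k} = n - 1" using assms(1) by simp
  thus ?thesis using assms by (simp add: undirected_weights_def clique_edge_def of_nat_diff)
qed

lemma star_weights:
  assumes "i \<in> {1..n}" "j \<in> {1..n}"
  shows "undirected_weights n star_edge i j =
    (if i = 1 then (if j = 1 then 0 else 1 / (real n - 1)) else of_bool (j = 1))"
proof (cases "i = 1")
  case True
  have "{k \<in> {1..n}. star_edge 1 k} = {1..n} - {1}" by (auto simp: star_edge_def)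
  hence "card {k \<in> {1..n}. star_edge 1 k} = n - 1" using assms(1) by simp
  thus ?thesis using assms True by (simp add: undirected_weights_def star_edge_def of_nat_diff)
next
  case False
  have "{k \<in> {1..n}. star_edge i k} = {1}" using False assms by (auto simp: star_edge_def)
  thus ?thesis using assms False by (auto simp: undirected_weights_def star_edge_def)
qed

locale star_clique =
  fixes n :: nat and r :: real
  assumes two_le_n: "2 \<le> n" and r_pos: "r > 0"

sublocale star_clique \<subseteq> moran_process n r "undirected_weights n star_edge" "undirected_weights n clique_edge"
proof
  fix i assume i: "i \<in> {1..n}"
  define k :: nat where "k = (if i = 1 then 2 else 1)"
  have "k \<in> {1..n}" "star_edge i k" "clique_edge i k"
    using two_le_n by (auto simp: k_def star_edge_def clique_edge_def)
  hence "\<exists>k\<in>{1..n}. star_edge i k" "\<exists>k\<in>{1..n}. clique_edge i k" by blast+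
  thus "(\<Sum>j\<in>{1..n}. undirected_weights n star_edge i j) = 1"
    "(\<Sum>j\<in>{1..n}. undirected_weights n clique_edge i j) = 1"
    by (simp_all only: undirected_weights_row_sum[OF i])
qed (simp_all add: r_pos undirected_weights_nonneg)

text \<open>The process is symmetric under permutations of the leaves, so it suffices to track the type
  of the centre 1 and the number of mutant leaves.\<close>
definition by_type :: "(bool \<Rightarrow> nat \<Rightarrow> real) \<Rightarrow> nat set \<Rightarrow> real" where
  "by_type \<phi> S = \<phi> (1 \<in> S) (card (S - {1}))"

context star_clique
begin

lemma clique_growth_sum:
  assumes "i \<in> S" "S \<subseteq> {1..n}"
  shows "(\<Sum>j\<in>{1..n}. undirected_weights n clique_edge i j * (F (insert j S) - F S))
    = (\<Sum>j\<in>{1..n} - S. F (insert j S) - F S) / (real n - 1)"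
proof -
  have "(\<Sum>j\<in>{1..n}. undirected_weights n clique_edge i j * (F (insert j S) - F S))
      = (\<Sum>j\<in>{1..n}. (F (insert j S) - F S) / (real n - 1))"
  proof (intro sum.cong refl)
    fix j assume j: "j \<in> {1..n}"
    have i: "i \<in> {1..n}" using assms by auto
    show "undirected_weights n clique_edge i j * (F (insert j S) - F S) = (F (insert j S) - F S) / (real n - 1)"
      using assms(1) by (cases "j = i") (simp_all add: clique_weights[OF i j] insert_absorb)
  qed
  also have "\<dots> = (\<Sum>j\<in>{1..n} - S. (F (insert j S) - F S) / (real n - 1))"
    using assms by (intro sum.mono_neutral_right) (auto simp: insert_absorb)
  finally show ?thesis by (simp add: sum_divide_distrib)
qed

lemma leaf_resident_sum:
  assumes "i \<in> {1..n}" "i \<noteq> 1"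
  shows "(\<Sum>j\<in>{1..n}. undirected_weights n star_edge i j * G (S - {j})) = G (S - {1})"
proof -
  have "(\<Sum>j\<in>{1..n}. undirected_weights n star_edge i j * G (S - {j}))
      = (\<Sum>j\<in>{1..n}. if j = 1 then G (S - {j}) else 0)"
    using assms by (intro sum.cong refl) (simp add: star_weights)
  thus ?thesis using assms by (simp add: sum.delta')
qed

lemma centre_resident_sum:
  assumes "1 \<notin> S" "S \<subseteq> {1..n}"
  shows "(\<Sum>j\<in>{1..n}. undirected_weights n star_edge 1 j * (F (S - {j}) - F S))
    = (\<Sum>j\<in>S. F (S - {j}) - F S) / (real n - 1)"
proof -
  have "(\<Sum>j\<in>{1..n}. undirected_weights n star_edge 1 j * (F (S - {j}) - F S))
      = (\<Sum>j\<in>{1..n}. (F (S - {j}) - F S) / (real n - 1))"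
    using assms two_le_n by (intro sum.cong refl) (auto simp: star_weights)
  also have "\<dots> = (\<Sum>j\<in>S. (F (S - {j}) - F S) / (real n - 1))"
    using assms by (intro sum.mono_neutral_right) auto
  finally show ?thesis by (simp add: sum_divide_distrib)
qed

text \<open>Numerator of the one-step drift of \<open>by_type \<phi>\<close> from a state with centre type \<open>b\<close> and
  \<open>k\<close> mutant leaves; the denominator is the total fitness.\<close>
definition type_drift :: "(bool \<Rightarrow> nat \<Rightarrow> real) \<Rightarrow> bool \<Rightarrow> nat \<Rightarrow> real" where
  "type_drift \<phi> b k = (if b
     then r * (real k + 1) * (real n - 1 - real k) * (\<phi> True (k + 1) - \<phi> True k) / (real n - 1)
        + (real n - 1 - real k) * (\<phi> False k - \<phi> True k)
     else (r * real k * ((\<phi> True k - \<phi> False k) + (real n - 1 - real k) * (\<phi> False (k + 1) - \<phi> False k))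
        + real k * (\<phi> False (k - 1) - \<phi> False k)) / (real n - 1))"

lemma expect_by_type_centre_mutant:
  assumes S: "S \<subseteq> {1..n}" "1 \<in> S" "S \<noteq> {1..n}"
  shows "expect S (by_type \<phi>) - by_type \<phi> S = type_drift \<phi> True (card (S - {1})) / total_fitness S"
proof -
  define k where "k = card (S - {1})"
  have fin: "finite S" using S(1) finite_subset by blast
  have transient: "transient S" using S by auto
  have card_S: "card S = k + 1" unfolding k_def using card_Suc_Diff1[OF fin S(2)] by simp
  have "card S < n" using S psubset_card_mono[of "{1..n}" S] by auto
  hence card_rest: "real (card ({1..n} - S)) = real n - 1 - real k"
    using S(1) fin card_S by (simp add: card_Diff_subset of_nat_diff)
  have grow: "by_type \<phi> (insert j S) - by_type \<phi> S = \<phi> True (k + 1) - \<phi> True k" if "j \<in> {1..n} - S" for j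
  proof -
    have "insert j S - {1} = insert j (S - {1})" "j \<notin> S - {1}" using that S(2) by auto
    thus ?thesis using fin S(2) unfolding by_type_def k_def by simp
  qed
  have "(\<Sum>j\<in>{1..n} - S. by_type \<phi> (insert j S) - by_type \<phi> S)
      = (\<Sum>j\<in>{1..n} - S. \<phi> True (k + 1) - \<phi> True k)"
    by (rule sum.cong[OF refl grow])
  also have "\<dots> = (real n - 1 - real k) * (\<phi> True (k + 1) - \<phi> True k)"
    using card_rest by simp
  finally have growth: "(\<Sum>j\<in>{1..n} - S. by_type \<phi> (insert j S) - by_type \<phi> S)
      = (real n - 1 - real k) * (\<phi> True (k + 1) - \<phi> True k)" .
  have "(\<Sum>i\<in>S. \<Sum>j\<in>{1..n}. undirected_weights n clique_edge i j * (by_type \<phi> (insert j S) - by_type \<phi> S))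
      = (\<Sum>i\<in>S. (real n - 1 - real k) * (\<phi> True (k + 1) - \<phi> True k) / (real n - 1))"
    using clique_growth_sum[OF _ S(1), of _ "by_type \<phi>"] unfolding growth by (intro sum.cong) auto
  hence "(\<Sum>i\<in>S. \<Sum>j\<in>{1..n}. undirected_weights n clique_edge i j * (by_type \<phi> (insert j S) - by_type \<phi> S))
      = (real k + 1) * ((real n - 1 - real k) * (\<phi> True (k + 1) - \<phi> True k) / (real n - 1))"
    using card_S by simp
  moreover have "(\<Sum>i\<in>{1..n} - S. \<Sum>j\<in>{1..n}. undirected_weights n star_edge i j * (by_type \<phi> (S - {j}) - by_type \<phi> S))
      = (\<Sum>i\<in>{1..n} - S. \<phi> False k - \<phi> True k)"
  proof (rule sum.cong[OF refl])
    fix i assume "i \<in> {1..n} - S"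
    hence i: "i \<in> {1..n}" "i \<noteq> 1" using S(2) by auto
    have "(\<Sum>j\<in>{1..n}. undirected_weights n star_edge i j * (by_type \<phi> (S - {j}) - by_type \<phi> S))
        = by_type \<phi> (S - {1}) - by_type \<phi> S"
      by (rule leaf_resident_sum[OF i, where G = "\<lambda>T. by_type \<phi> T - by_type \<phi> S"])
    also have "\<dots> = \<phi> False k - \<phi> True k" using S(2) by (simp add: by_type_def k_def)
    finally show "(\<Sum>j\<in>{1..n}. undirected_weights n star_edge i j * (by_type \<phi> (S - {j}) - by_type \<phi> S))
        = \<phi> False k - \<phi> True k" .
  qed
  ultimately show ?thesis
    unfolding expect_minus_self[OF S(1) transient] k_def[symmetric] using card_rest
    by (simp add: type_drift_def mult.assoc)
qed

lemma by_type_growth_centre_resident: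
  assumes S: "S \<subseteq> {1..n}" "1 \<notin> S"
  defines "k \<equiv> card S"
  shows "(\<Sum>j\<in>{1..n} - S. by_type \<phi> (insert j S) - by_type \<phi> S)
    = (\<phi> True k - \<phi> False k) + (real n - 1 - real k) * (\<phi> False (k + 1) - \<phi> False k)"
proof -
  have fin: "finite S" using S(1) finite_subset by blast
  have one: "1 \<in> {1..n} - S" using S(2) two_le_n by simp
  have sub: "S \<subseteq> {1..n} - {1}" using S by auto
  have "{1..n} - S - {1} = ({1..n} - {1}) - S" by blast
  moreover have "card ({1..n} - {1}) = n - 1" using two_le_n by simp
  ultimately have "card ({1..n} - S - {1}) = (n - 1) - k" unfolding k_def using sub fin by (simp add: card_Diff_subset)
  moreover have "k \<le> n - 1" unfolding k_def using card_mono[OF _ sub] two_le_n by simp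
  ultimately have card_leaves: "real (card ({1..n} - S - {1})) = real n - 1 - real k"
    using two_le_n by (simp add: of_nat_diff)
  have "(\<Sum>j\<in>{1..n} - S. by_type \<phi> (insert j S) - by_type \<phi> S)
      = (by_type \<phi> (insert 1 S) - by_type \<phi> S) + (\<Sum>j\<in>{1..n} - S - {1}. by_type \<phi> (insert j S) - by_type \<phi> S)"
    by (rule sum.remove[OF _ one]) simp
  also have "by_type \<phi> (insert 1 S) - by_type \<phi> S = \<phi> True k - \<phi> False k"
    using S(2) unfolding by_type_def k_def by simp
  also have "(\<Sum>j\<in>{1..n} - S - {1}. by_type \<phi> (insert j S) - by_type \<phi> S)
      = (\<Sum>j\<in>{1..n} - S - {1}. \<phi> False (k + 1) - \<phi> False k)"
    using fin S(2) unfolding by_type_def k_def by (intro sum.cong) auto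
  finally show ?thesis using card_leaves by simp
qed

lemma expect_by_type_centre_resident:
  assumes S: "S \<subseteq> {1..n}" "1 \<notin> S" "S \<noteq> {}"
  shows "expect S (by_type \<phi>) - by_type \<phi> S = type_drift \<phi> False (card (S - {1})) / total_fitness S"
proof -
  define k where "k = card S"
  have fin: "finite S" using S(1) finite_subset by blast
  have S_minus: "S - {1} = S" using S(2) by simp
  have one: "1 \<in> {1..n} - S" using S(2) two_le_n by simp
  have transient: "transient S" using S two_le_n by auto
  have "(\<Sum>i\<in>S. \<Sum>j\<in>{1..n}. undirected_weights n clique_edge i j * (by_type \<phi> (insert j S) - by_type \<phi> S))
      = (\<Sum>i\<in>S. ((\<phi> True k - \<phi> False k) + (real n - 1 - real k) * (\<phi> False (k + 1) - \<phi> False k)) / (real n - 1))"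
    using clique_growth_sum[OF _ S(1), of _ "by_type \<phi>"]
    unfolding by_type_growth_centre_resident[OF S(1,2)] k_def by (intro sum.cong) auto
  hence mutants: "(\<Sum>i\<in>S. \<Sum>j\<in>{1..n}. undirected_weights n clique_edge i j * (by_type \<phi> (insert j S) - by_type \<phi> S))
      = real k * ((\<phi> True k - \<phi> False k) + (real n - 1 - real k) * (\<phi> False (k + 1) - \<phi> False k)) / (real n - 1)"
    unfolding k_def by simp
  have shrink: "(\<Sum>j\<in>S. by_type \<phi> (S - {j}) - by_type \<phi> S) = real k * (\<phi> False (k - 1) - \<phi> False k)"
    using fin S(2) unfolding by_type_def k_def by (simp add: card_Diff_singleton)
  have "(\<Sum>i\<in>{1..n} - S. \<Sum>j\<in>{1..n}. undirected_weights n star_edge i j * (by_type \<phi> (S - {j}) - by_type \<phi> S))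
      = (\<Sum>j\<in>{1..n}. undirected_weights n star_edge 1 j * (by_type \<phi> (S - {j}) - by_type \<phi> S))
        + (\<Sum>i\<in>{1..n} - S - {1}. \<Sum>j\<in>{1..n}. undirected_weights n star_edge i j * (by_type \<phi> (S - {j}) - by_type \<phi> S))"
    by (rule sum.remove[OF _ one]) simp
  also have "(\<Sum>j\<in>{1..n}. undirected_weights n star_edge 1 j * (by_type \<phi> (S - {j}) - by_type \<phi> S))
      = real k * (\<phi> False (k - 1) - \<phi> False k) / (real n - 1)"
    unfolding centre_resident_sum[OF S(2,1)] shrink ..
  also have "(\<Sum>i\<in>{1..n} - S - {1}. \<Sum>j\<in>{1..n}. undirected_weights n star_edge i j * (by_type \<phi> (S - {j}) - by_type \<phi> S))
      = (\<Sum>i\<in>{1..n} - S - {1}. by_type \<phi> (S - {1}) - by_type \<phi> S)"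
    by (intro sum.cong refl leaf_resident_sum) auto
  finally have residents: "(\<Sum>i\<in>{1..n} - S. \<Sum>j\<in>{1..n}. undirected_weights n star_edge i j * (by_type \<phi> (S - {j}) - by_type \<phi> S))
      = real k * (\<phi> False (k - 1) - \<phi> False k) / (real n - 1)"
    unfolding S_minus by simp
  show ?thesis
    unfolding expect_minus_self[OF S(1) transient] mutants residents S_minus k_def[symmetric]
    by (simp add: type_drift_def add_divide_distrib)
qed

lemma expect_by_type_minus_self:
  assumes "S \<subseteq> {1..n}" "transient S"
  shows "expect S (by_type \<phi>) - by_type \<phi> S = type_drift \<phi> (1 \<in> S) (card (S - {1})) / total_fitness S"
  using assms expect_by_type_centre_mutant expect_by_type_centre_resident by (cases "1 \<in> S") auto

lemma transient_type_bounds: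
  assumes "S \<subseteq> {1..n}" "transient S"
  shows "1 \<in> S \<Longrightarrow> card (S - {1}) + 2 \<le> n"
    and "1 \<notin> S \<Longrightarrow> 1 \<le> card (S - {1}) \<and> card (S - {1}) \<le> n - 1"
proof -
  have fin: "finite S" using assms(1) finite_subset by blast
  show "card (S - {1}) + 2 \<le> n" if "1 \<in> S"
  proof -
    have "card S < n" using assms psubset_card_mono[of "{1..n}" S] by auto
    moreover have "card S = Suc (card (S - {1}))" using card_Suc_Diff1[OF fin that] by simp
    ultimately show ?thesis by simp
  qed
  show "1 \<le> card (S - {1}) \<and> card (S - {1}) \<le> n - 1" if "1 \<notin> S"
  proof -
    have "S \<subseteq> {1..n} - {1}" using assms that by auto
    hence "card S \<le> n - 1" using card_mono[of "{1..n} - {1}" S] two_le_n by simp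
    thus ?thesis using that assms fin by (simp add: Suc_leI card_gt_0_iff)
  qed
qed

lemma by_type_subharmonic:
  assumes "\<And>k. k + 2 \<le> n \<Longrightarrow> 0 \<le> type_drift \<phi> True k"
    and "\<And>k. 1 \<le> k \<Longrightarrow> k \<le> n - 1 \<Longrightarrow> 0 \<le> type_drift \<phi> False k"
    and S: "S \<subseteq> {1..n}"
  shows "by_type \<phi> S \<le> expect S (by_type \<phi>)"
proof (cases "transient S")
  case True
  have "0 \<le> type_drift \<phi> (1 \<in> S) (card (S - {1}))"
    using assms transient_type_bounds[OF S True] by (cases "1 \<in> S") auto
  hence "0 \<le> expect S (by_type \<phi>) - by_type \<phi> S"
    using expect_by_type_minus_self[OF S True] total_fitness_pos[OF S] True by simp
  thus ?thesis by simp
next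
  case False
  thus ?thesis using expect_absorbing[OF S False] by simp
qed

lemma by_type_Lyapunov:
  assumes "\<And>k. k + 2 \<le> n \<Longrightarrow> 0 < type_drift \<phi> True k"
    and "\<And>k. 1 \<le> k \<Longrightarrow> k \<le> n - 1 \<Longrightarrow> 0 < type_drift \<phi> False k"
    and S: "S \<subseteq> {1..n}" "transient S"
  shows "by_type \<phi> S < expect S (by_type \<phi>)"
proof -
  have "0 < type_drift \<phi> (1 \<in> S) (card (S - {1}))"
    using assms transient_type_bounds[OF S] by (cases "1 \<in> S") auto
  hence "0 < expect S (by_type \<phi>) - by_type \<phi> S"
    using expect_by_type_minus_self[OF S] total_fitness_pos[OF S(1)] S(2) by simp
  thus ?thesis by simp
qed

lemma power_count_drift:
  fixes M :: real
  defines "\<psi> \<equiv> \<lambda>b k. M ^ (if b then Suc k else k)"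
  shows "type_drift \<psi> True k
      = (real n - 1 - real k) * M ^ k * (M - 1) * (r * (real k + 1) * M - (real n - 1)) / (real n - 1)"
    and "1 \<le> k \<Longrightarrow> type_drift \<psi> False k
      = real k * M ^ (k - 1) * (M - 1) * (r * M * (real n - real k) - 1) / (real n - 1)"
proof -
  have n1: "real n - 1 \<noteq> 0" using two_le_n by simp
  show "type_drift \<psi> True k
      = (real n - 1 - real k) * M ^ k * (M - 1) * (r * (real k + 1) * M - (real n - 1)) / (real n - 1)"
    unfolding type_drift_def \<psi>_def using n1 by (simp add: field_simps)
  assume "1 \<le> k"
  then obtain j where k: "k = Suc j" by (cases k) auto
  show "type_drift \<psi> False k = real k * M ^ (k - 1) * (M - 1) * (r * M * (real n - real k) - 1) / (real n - 1)"
    unfolding type_drift_def \<psi>_def k using n1 by (simp add: field_simps)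
qed

lemma power_count_Lyapunov:
  fixes M :: real
  assumes M: "M > 1" "r * M > real n - 1" and S: "S \<subseteq> {1..n}" "transient S"
  shows "by_type (\<lambda>b k. M ^ (if b then Suc k else k)) S
    < expect S (by_type (\<lambda>b k. M ^ (if b then Suc k else k)))"
proof (rule by_type_Lyapunov[OF _ _ S])
  have n1: "real n - 1 > 0" using two_le_n by simp
  fix k
  assume k: "k + 2 \<le> n"
  have "r * M \<le> r * (real k + 1) * M" using M r_pos by (simp add: algebra_simps)
  hence "r * (real k + 1) * M - (real n - 1) > 0" using M by linarith
  moreover have "real n - 1 - real k > 0" using k by simp
  ultimately show "0 < type_drift (\<lambda>b k. M ^ (if b then Suc k else k)) True k"
    unfolding power_count_drift using M n1 by simp
next
  have n1: "real n - 1 > 0" using two_le_n by simp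
  fix k
  assume k: "1 \<le> k" "k \<le> n - 1"
  have "r * M \<le> r * M * (real n - real k)" using M r_pos k two_le_n by (simp add: of_nat_diff)
  hence "r * M * (real n - real k) - 1 > 0" using M two_le_n by simp
  thus "0 < type_drift (\<lambda>b k. M ^ (if b then Suc k else k)) False k"
    unfolding power_count_drift(2)[OF k(1)] using M n1 k by simp
qed

definition leaf_profile :: "(nat \<Rightarrow> real) \<Rightarrow> bool \<Rightarrow> nat \<Rightarrow> real" where
  "leaf_profile h b k = (if b \<and> k = n - 1 then 1 else h k)"

lemma leaf_profile_subharmonic:
  assumes recurrence: "\<And>k. 1 \<le> k \<Longrightarrow> k \<le> n - 2 \<Longrightarrow> r * (real n - 1 - real k) * (h (k + 1) - h k) = h k - h (k - 1)"
    and top: "h (n - 1) - h (n - 2) \<le> r * (1 - h (n - 1))"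
    and mono: "\<And>k. k \<le> n - 3 \<Longrightarrow> h k \<le> h (k + 1)" and "h (n - 2) \<le> 1"
    and S: "S \<subseteq> {1..n}"
  shows "by_type (leaf_profile h) S \<le> expect S (by_type (leaf_profile h))"
proof (rule by_type_subharmonic[OF _ _ S])
  have n1: "real n - 1 > 0" using two_le_n by simp
  fix k assume k: "k + 2 \<le> n"
  have "h k \<le> leaf_profile h True (k + 1)"
  proof (cases "k + 1 = n - 1")
    case True
    hence "k = n - 2" by simp
    thus ?thesis using \<open>h (n - 2) \<le> 1\<close> True by (simp add: leaf_profile_def)
  next
    case False
    thus ?thesis using mono[of k] k by (simp add: leaf_profile_def)
  qed
  moreover have "leaf_profile h True k = h k" "leaf_profile h False k = h k"
    using k by (auto simp: leaf_profile_def)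
  ultimately show "0 \<le> type_drift (leaf_profile h) True k"
    unfolding type_drift_def using k n1 r_pos by simp
next
  have n1: "real n - 1 > 0" using two_le_n by simp
  fix k assume k: "1 \<le> k" "k \<le> n - 1"
  show "0 \<le> type_drift (leaf_profile h) False k"
  proof (cases "k = n - 1")
    case True
    hence "type_drift (leaf_profile h) False k
        = real k * (r * (1 - h (n - 1)) - (h (n - 1) - h (n - 2))) / (real n - 1)"
      using two_le_n by (simp add: type_drift_def leaf_profile_def of_nat_diff numeral_2_eq_2 algebra_simps)
    thus ?thesis using top n1 by simp
  next
    case False
    hence "type_drift (leaf_profile h) False k
        = real k * (r * (real n - 1 - real k) * (h (k + 1) - h k) - (h k - h (k - 1))) / (real n - 1)"
      by (simp add: type_drift_def leaf_profile_def algebra_simps)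
    thus ?thesis using recurrence[of k] k False by simp
  qed
qed

lemma fixation_prob_ge_leaf_profile:
  assumes h_0: "h 0 = 0" and le_1: "\<And>k. k \<le> n - 1 \<Longrightarrow> h k \<le> 1"
    and recurrence: "\<And>k. 1 \<le> k \<Longrightarrow> k \<le> n - 2 \<Longrightarrow> r * (real n - 1 - real k) * (h (k + 1) - h k) = h k - h (k - 1)"
    and top: "h (n - 1) - h (n - 2) \<le> r * (1 - h (n - 1))"
    and mono: "\<And>k. k \<le> n - 3 \<Longrightarrow> h k \<le> h (k + 1)"
  shows "(real n - 1) * h 1 / real n \<le> fixation_prob n r (undirected_weights n star_edge) (undirected_weights n clique_edge)"
proof -
  define M where "M = real n / r + 1"
  have "real n / r > 0" "r * M = real n + r" unfolding M_def using r_pos two_le_n by (simp_all add: field_simps)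
  hence M: "M > 1" "r * M > real n - 1" unfolding M_def using r_pos by simp_all
  define g where "g = by_type (leaf_profile h)"
  have sub: "g S \<le> expect S g" if "S \<subseteq> {1..n}" for S
    unfolding g_def using le_1[of "n - 2"] that by (intro leaf_profile_subharmonic[OF recurrence top mono]) auto
  have le1: "g S \<le> 1" if "S \<subseteq> {1..n}" for S
  proof -
    have "S - {1} \<subseteq> {1..n} - {1}" using that by blast
    hence "card (S - {1}) \<le> n - 1" using card_mono[of "{1..n} - {1}"] two_le_n by fastforce
    thus ?thesis unfolding g_def by_type_def leaf_profile_def using le_1 by simp
  qed
  have "g {} \<le> 0" unfolding g_def by_type_def leaf_profile_def using h_0 by simp
  hence "(\<Sum>i\<in>{1..n}. g {i}) / real n \<le> fixation_prob n r (undirected_weights n star_edge) (undirected_weights n clique_edge)"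
    using fixation_prob_ge[OF power_count_Lyapunov[OF M] sub le1] by blast
  moreover have "(\<Sum>i\<in>{1..n}. g {i}) = (real n - 1) * h 1"
  proof -
    have "(\<Sum>i\<in>{1..n}. g {i}) = g {1} + (\<Sum>i\<in>{1..n} - {1}. g {i})"
      using two_le_n by (subst sum.remove[of _ 1]) auto
    also have "(\<Sum>i\<in>{1..n} - {1}. g {i}) = (\<Sum>i\<in>{1..n} - {1}. h 1)"
      by (intro sum.cong refl) (auto simp: g_def by_type_def leaf_profile_def)
    finally show ?thesis using two_le_n h_0 by (simp add: g_def by_type_def leaf_profile_def of_nat_diff)
  qed
  ultimately show ?thesis by simp
qed

end

lemma fact_le_power_mult_fact:
  fixes r :: real
  assumes r: "r > 0" and threshold: "r ^ (p + 2) * fact p > 1" and i: "i \<le> p"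
  shows "fact (p - i) \<le> r ^ i * fact p"
proof (cases "r * (real (p - i) + 1) \<ge> 1")
  case True
  have "1 \<le> (\<Prod>m\<in>{p - i..<p}. r * real (Suc m))"
  proof (rule prod_ge_1)
    fix m assume "m \<in> {p - i..<p}"
    hence "r * (real (p - i) + 1) \<le> r * real (Suc m)" using r by (intro mult_left_mono) auto
    thus "1 \<le> r * real (Suc m)" using True by linarith
  qed
  also have "\<dots> = r ^ i * real (prod Suc {p - i..<p})"
    using i by (simp add: prod.distrib of_nat_prod)
  finally have "1 * fact (p - i) \<le> r ^ i * real (prod Suc {p - i..<p}) * fact (p - i)"
    by (intro mult_right_mono) auto
  also have "\<dots> = r ^ i * fact p"
    using fact_split[OF i, where 'a = real] by simp
  finally show ?thesis by simp
next
  case False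
  have "r * 1 \<le> r * (real (p - i) + 1)" using r by (intro mult_left_mono) auto
  hence r1: "r < 1" using False by linarith
  have "(\<Prod>m\<in>{0..<p - i}. r * real (Suc m)) \<le> 1"
  proof (rule prod_le_1)
    fix m assume "m \<in> {0..<p - i}"
    hence "r * real (Suc m) \<le> r * (real (p - i) + 1)" using r by (intro mult_left_mono) auto
    moreover have "0 \<le> r * real (Suc m)" using r by simp
    ultimately show "0 \<le> r * real (Suc m) \<and> r * real (Suc m) \<le> 1" using False by linarith
  qed
  also have "(\<Prod>m\<in>{0..<p - i}. r * real (Suc m)) = r ^ (p - i) * fact (p - i)"
    by (simp add: prod.distrib fact_prod_Suc of_nat_prod)
  finally have small: "r ^ (p - i) * fact (p - i) \<le> 1" .
  have "r ^ (p + 2) \<le> r ^ p" using r r1 by (intro power_decreasing) auto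
  hence "r ^ (p + 2) * fact p \<le> r ^ p * fact p" by (intro mult_right_mono) auto
  hence "1 \<le> r ^ p * fact p" using threshold by linarith
  moreover have "r ^ p * fact p = r ^ (p - i) * (r ^ i * fact p)"
    using i by (simp add: power_add[symmetric])
  ultimately have "r ^ (p - i) * fact (p - i) \<le> r ^ (p - i) * (r ^ i * fact p)"
    using small by linarith
  thus ?thesis using r by simp
qed

lemma one_le_power_mult_fact:
  fixes r :: real
  assumes r: "r > 0" and threshold: "r ^ (p + 2) * fact p > 1"
  shows "1 \<le> r ^ (p + 1) * fact p"
proof (cases "r \<ge> 1")
  case True
  have "1 * 1 \<le> r ^ (p + 1) * fact p"
    using True by (intro mult_mono one_le_power) auto
  thus ?thesis by simp
next
  case False
  have "r ^ (p + 2) \<le> r ^ (p + 1)" using False r by (intro power_decreasing) auto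
  hence "r ^ (p + 2) * fact p \<le> r ^ (p + 1) * fact p" by (intro mult_right_mono) auto
  thus ?thesis using threshold by linarith
qed

text \<open>The increments of the lower profile: \<open>step_weight n r (k + 1) = step_weight n r k / (r (n - 1 - k))\<close>
  mirrors the balance condition of a subharmonic function on states with a resident centre.\<close>
definition step_weight :: "nat \<Rightarrow> real \<Rightarrow> nat \<Rightarrow> real" where
  "step_weight n r l = fact (n - 1 - l) / (r ^ (l - 1) * fact (n - 2))"

definition bound_denominator :: "nat \<Rightarrow> real \<Rightarrow> real" where
  "bound_denominator n r = 1 + 1 / (r * (real n - 2)) + 1 / (r\<^sup>2 * (real n - 3))"

lemma step_weight_1: "step_weight n r 1 = 1"
  by (simp add: step_weight_def numeral_2_eq_2)

lemma step_weight_nonneg: "r > 0 \<Longrightarrow> step_weight n r l \<ge> 0"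
  by (simp add: step_weight_def)

lemma step_weight_recurrence:
  assumes r: "r > 0" and k: "1 \<le> k" "k \<le> n - 2"
  shows "r * (real n - 1 - real k) * step_weight n r (k + 1) = step_weight n r k"
proof -
  define q where "q = n - 2 - k"
  have e1: "n - 1 - (k + 1) = q" "n - 1 - k = Suc q" "k + 1 - 1 = k" using k unfolding q_def by auto
  have e2: "real n - 1 - real k = real (Suc q)" using k unfolding q_def by (simp add: of_nat_diff)
  have e3: "r ^ k = r * r ^ (k - 1)" using k by (simp add: power_eq_if)
  show ?thesis unfolding step_weight_def e1 e2 e3 using r by (simp add: field_simps)
qed

lemma step_weight_tail_le:
  fixes r :: real
  assumes r: "r > 0" and threshold: "r ^ (p + 2) * fact p > 1"
  defines "c \<equiv> 1 / (r ^ 2 * (real p + 2) * (real p + 1))"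
  shows "l \<in> {3..p + 3} \<Longrightarrow> step_weight (p + 4) r l \<le> c"
    and "step_weight (p + 4) r (p + 3) / r \<le> c"
proof -
  have c: "c \<ge> 0" unfolding c_def using r by simp
  have fact_p2: "(fact (p + 2) :: real) = (real p + 2) * (real p + 1) * fact p"
    by (simp add: numeral_2_eq_2 algebra_simps)
  assume l: "l \<in> {3..p + 3}"
  then obtain i where i: "l = i + 3" "i \<le> p" by (metis add.commute atLeastAtMost_iff le_Suc_ex add_le_cancel_left)
  have "p + 4 - 1 - l = p - i" "l - 1 = i + 2" "p + 4 - 2 = p + 2" using i by auto
  hence "step_weight (p + 4) r l = c * (fact (p - i) / (r ^ i * fact p))"
    unfolding step_weight_def c_def using r by (simp add: fact_p2 power_add field_simps power2_eq_square)
  also have "\<dots> \<le> c * 1"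
    using fact_le_power_mult_fact[OF r threshold i(2)] r c by (intro mult_left_mono) simp_all
  finally show "step_weight (p + 4) r l \<le> c" by simp
next
  have c: "c \<ge> 0" unfolding c_def using r by simp
  have fact_p2: "(fact (p + 2) :: real) = (real p + 2) * (real p + 1) * fact p"
    by (simp add: numeral_2_eq_2 algebra_simps)
  have "step_weight (p + 4) r (p + 3) / r = c * (1 / (r ^ (p + 1) * fact p))"
    unfolding step_weight_def c_def using r
    by (simp add: fact_p2 power_add field_simps numeral_2_eq_2 numeral_3_eq_3)
  also have "\<dots> \<le> c * 1"
    using one_le_power_mult_fact[OF r threshold] r c by (intro mult_left_mono) simp_all
  finally show "step_weight (p + 4) r (p + 3) / r \<le> c" by simp
qed

lemma step_weight_sum_le:
  fixes r :: real
  assumes n: "n \<ge> 4" and r: "r > 0" and threshold: "r ^ (n - 2) * fact (n - 4) > 1"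
  shows "(\<Sum>l\<in>{1..n - 1}. step_weight n r l) + step_weight n r (n - 1) / r \<le> bound_denominator n r"
proof -
  obtain p where p: "n = p + 4" using n by (metis add.commute le_Suc_ex)
  have threshold': "r ^ (p + 2) * fact p > 1" using threshold p by simp
  define c where "c = 1 / (r ^ 2 * (real p + 2) * (real p + 1))"
  note tail = step_weight_tail_le[OF r threshold', folded c_def]
  have w2: "step_weight n r 2 = 1 / (r * (real p + 2))"
  proof -
    have "fact (p + 2) = (real p + 2) * (fact (p + 1) :: real)" by (simp add: numeral_2_eq_2 algebra_simps)
    moreover have "p + 4 - 1 - 2 = p + 1" "p + 4 - 2 = p + 2" by auto
    ultimately show ?thesis unfolding p by (simp add: step_weight_def)
  qed
  have "{1..n - 1} = insert 1 (insert 2 {3..p + 3})" unfolding p by auto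
  hence "(\<Sum>l\<in>{1..n - 1}. step_weight n r l)
      = step_weight n r 1 + step_weight n r 2 + (\<Sum>l\<in>{3..p + 3}. step_weight n r l)" by simp
  also have "(\<Sum>l\<in>{3..p + 3}. step_weight n r l) \<le> (\<Sum>l\<in>{3..p + 3}. c)"
    unfolding p by (rule sum_mono) (rule tail(1))
  also have "(\<Sum>l\<in>{3..p + 3}. c) = (real p + 1) * c" by simp
  finally have "(\<Sum>l\<in>{1..n - 1}. step_weight n r l) + step_weight n r (n - 1) / r
      \<le> 1 + 1 / (r * (real p + 2)) + (real p + 2) * c"
    using step_weight_1 w2 tail(2) unfolding p by (simp add: algebra_simps)
  also have "(real p + 2) * c = 1 / (r\<^sup>2 * (real p + 1))" unfolding c_def by simp
  finally show ?thesis unfolding bound_denominator_def p by (simp add: add.commute)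
qed

definition fixation_profile :: "nat \<Rightarrow> real \<Rightarrow> nat \<Rightarrow> real" where
  "fixation_profile n r k = (\<Sum>l\<in>{1..k}. step_weight n r l) / bound_denominator n r"

context
  fixes n :: nat and r :: real
  assumes n: "n \<ge> 4" and r: "r > 0" and threshold: "r ^ (n - 2) * fact (n - 4) > 1"
begin

lemma bound_denominator_pos: "bound_denominator n r > 0"
  unfolding bound_denominator_def using n r by (intro add_pos_pos) auto

lemma fixation_profile_Suc:
  "fixation_profile n r (Suc k) = fixation_profile n r k + step_weight n r (Suc k) / bound_denominator n r"
  unfolding fixation_profile_def by (simp add: add_divide_distrib)

lemma fixation_profile_recurrence:
  assumes "1 \<le> k" "k \<le> n - 2"
  shows "r * (real n - 1 - real k) * (fixation_profile n r (k + 1) - fixation_profile n r k)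
    = fixation_profile n r k - fixation_profile n r (k - 1)"
  using fixation_profile_Suc[of k] fixation_profile_Suc[of "k - 1"] step_weight_recurrence[OF r assms] assms
  by (simp add: field_simps)

lemma fixation_profile_mono:
  assumes "k \<le> l"
  shows "fixation_profile n r k \<le> fixation_profile n r l"
  unfolding fixation_profile_def using assms step_weight_nonneg[OF r] bound_denominator_pos
  by (intro divide_right_mono sum_mono2) auto

lemma fixation_profile_top_margin:
  "fixation_profile n r (n - 1) + step_weight n r (n - 1) / (r * bound_denominator n r) \<le> 1"
proof -
  have "fixation_profile n r (n - 1) + step_weight n r (n - 1) / (r * bound_denominator n r)
      = ((\<Sum>l\<in>{1..n - 1}. step_weight n r l) + step_weight n r (n - 1) / r) / bound_denominator n r"
    unfolding fixation_profile_def by (simp add: add_divide_distrib)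
  also have "\<dots> \<le> 1"
    using step_weight_sum_le[OF n r threshold] bound_denominator_pos by simp
  finally show ?thesis .
qed

lemma fixation_profile_top:
  "fixation_profile n r (n - 1) - fixation_profile n r (n - 2) \<le> r * (1 - fixation_profile n r (n - 1))"
proof -
  have "n - 1 = Suc (n - 2)" using n by simp
  hence "fixation_profile n r (n - 1) - fixation_profile n r (n - 2) = step_weight n r (n - 1) / bound_denominator n r"
    using fixation_profile_Suc[of "n - 2"] by simp
  also have "\<dots> = r * (step_weight n r (n - 1) / (r * bound_denominator n r))" using r by simp
  also have "\<dots> \<le> r * (1 - fixation_profile n r (n - 1))"
    using fixation_profile_top_margin r by (intro mult_left_mono) auto
  finally show ?thesis .
qed

lemma fixation_profile_le_1:
  assumes "k \<le> n - 1"
  shows "fixation_profile n r k \<le> 1"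
proof -
  have "step_weight n r (n - 1) / (r * bound_denominator n r) \<ge> 0"
    using step_weight_nonneg[OF r] r bound_denominator_pos by simp
  thus ?thesis using fixation_profile_mono[OF assms] fixation_profile_top_margin by linarith
qed

end

lemma threshold_power_fact_gt_1:
  fixes r :: real
  assumes n: "n \<ge> 4" and r: "r > 0" and threshold: "r > fact (n - 4) powr (- 1 / (real n - 2))"
  shows "r ^ (n - 2) * fact (n - 4) > 1"
proof -
  define F :: real where "F = fact (n - 4)"
  define e where "e = real n - 2"
  have F: "F > 0" unfolding F_def by simp
  have e: "e > 0" "e = real (n - 2)" unfolding e_def using n by (auto simp: of_nat_diff)
  have "(F powr (- 1 / e)) powr e < r powr e"
    using threshold F e by (intro powr_less_mono2) (auto simp: F_def e_def)
  moreover have "(F powr (- 1 / e)) powr e = inverse F"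
  proof -
    have "(F powr (- 1 / e)) powr e = F powr ((- 1 / e) * e)" by (rule powr_powr)
    also have "(- 1 / e) * e = - 1" using e by simp
    finally show ?thesis using F by (simp add: powr_minus)
  qed
  moreover have "r powr e = r ^ (n - 2)" unfolding e(2) using r by (rule powr_realpow)
  ultimately have "inverse F < r ^ (n - 2)" by simp
  thus ?thesis using F unfolding F_def[symmetric] by (simp add: field_simps)
qed

lemma divide_one_plus_gt_diff:
  fixes x a b :: real
  assumes "0 < x" "x < 1" "a > 0" "b > 0"
  shows "x / (1 + a + b) > x - a - b"
proof -
  have "(x - a - b) * (1 + a + b) = x - (a + b) * (1 - x + a + b)" by (simp add: algebra_simps)
  also have "\<dots> < x" using assms by (simp add: add_pos_pos)
  finally show ?thesis using assms by (simp add: pos_less_divide_eq add_pos_pos)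
qed

theorem theorem3:
  fixes n :: nat and r :: real
  assumes "n \<ge> 4" and "r > 0"
    and "r > (fact (n - 4)) powr (- 1 / (real n - 2))"
  shows "fixation_prob n r (undirected_weights n star_edge) (undirected_weights n clique_edge)
           \<ge> (1 - 1 / real n) / (1 + 1 / (r * (real n - 2)) + 1 / (r\<^sup>2 * (real n - 3)))
       \<and> (1 - 1 / real n) / (1 + 1 / (r * (real n - 2)) + 1 / (r\<^sup>2 * (real n - 3)))
           > 1 - 1 / real n - 1 / (r * (real n - 2)) - 1 / (r\<^sup>2 * (real n - 3))"
proof
  interpret star_clique n r using assms by unfold_locales auto
  have threshold: "r ^ (n - 2) * fact (n - 4) > 1" by (rule threshold_power_fact_gt_1[OF assms])
  note profile = fixation_profile_le_1 fixation_profile_recurrence fixation_profile_top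
  have "(real n - 1) * fixation_profile n r 1 / real n
      \<le> fixation_prob n r (undirected_weights n star_edge) (undirected_weights n clique_edge)"
  proof (rule fixation_prob_ge_leaf_profile)
    show "fixation_profile n r 0 = 0" by (simp add: fixation_profile_def)
    show "fixation_profile n r k \<le> fixation_profile n r (k + 1)" for k
      by (rule fixation_profile_mono[OF assms(1,2) threshold]) simp
  qed (rule profile[OF assms(1,2) threshold]; assumption)+
  moreover have "(real n - 1) * fixation_profile n r 1 / real n = (1 - 1 / real n) / bound_denominator n r"
    using assms(1) step_weight_1[of n r] by (simp add: fixation_profile_def field_simps)
  ultimately show "fixation_prob n r (undirected_weights n star_edge) (undirected_weights n clique_edge)
      \<ge> (1 - 1 / real n) / (1 + 1 / (r * (real n - 2)) + 1 / (r\<^sup>2 * (real n - 3)))"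
    by (simp add: bound_denominator_def)
next
  show "(1 - 1 / real n) / (1 + 1 / (r * (real n - 2)) + 1 / (r\<^sup>2 * (real n - 3)))
      > 1 - 1 / real n - 1 / (r * (real n - 2)) - 1 / (r\<^sup>2 * (real n - 3))"
    using divide_one_plus_gt_diff[of "1 - 1 / real n" "1 / (r * (real n - 2))" "1 / (r\<^sup>2 * (real n - 3))"] assms
    by (simp add: add.assoc)
qed

end
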